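(* Let $(\Xi,\Xi^\infty)$ and $(\Lambda,\Lambda^\infty)$ be countable approximate groups, and let $f:\Xi^\infty\to\Lambda^\infty$ be a function with $f(\Xi)\subseteq\Lambda$ which is a quasimorphism (its defect set $D(f)=\{f(y)^{-1}f(x)^{-1}f(xy)\mid x,y\in\Xi^\infty\}$ is finite) and is symmetric ($f(x^{-1})=f(x)^{-1}$ for all $x\in\Xi^\infty$). Let $d$ and $d'$ be left-invariant proper metrics on $\Xi^\infty$ and $\Lambda^\infty$ respectively. Then the restriction $f|_\Xi:(\Xi,d|_{\Xi\times\Xi})\to(\Lambda,d'|_{\Lambda\times\Lambda})$ is coarsely Lipschitz, i.e. for every $t>0$ there is $s>0$ such that $d(\xi,\eta)\leq t$ with $\xi,\eta\in\Xi$ implies $d'(f(\xi),f(\eta))\leq s$.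
   Context: A subset $\Lambda$ of a group $G$ is an approximate subgroup if $\Lambda=\Lambda^{-1}$, $e\in\Lambda$, and there is a finite $F\subset G$ with $\Lambda^2\subseteq\Lambda F$. Its enveloping group is $\Lambda^\infty=\bigcup_{k\in\mathbb N}\Lambda^k$; $(\Lambda,\Lambda^\infty)$ is called an approximate group, countable if $\Lambda$ is countable. Countable groups are regarded as discrete; a metric is proper if closed balls are compact. *)

theory Defs
  imports "HOL-Algebra.Algebra"
begin

fun set_pow :: "('a, 'b) monoid_scheme \<Rightarrow> 'a set \<Rightarrow> nat \<Rightarrow> 'a set" where
  "set_pow G L 0 = {\<one>\<^bsub>G\<^esub>}"
| "set_pow G L (Suc k) = L <#>\<^bsub>G\<^esub> set_pow G L k"

definition enveloping :: "('a, 'b) monoid_scheme \<Rightarrow> 'a set \<Rightarrow> 'a set" where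
  "enveloping G L = (\<Union>k. set_pow G L k)"

definition approx_subgroup :: "('a, 'b) monoid_scheme \<Rightarrow> 'a set \<Rightarrow> bool" where
  "approx_subgroup G L \<longleftrightarrow> L \<subseteq> carrier G \<and> set_inv\<^bsub>G\<^esub> L = L \<and> \<one>\<^bsub>G\<^esub> \<in> L \<and>
     (\<exists>F. finite F \<and> F \<subseteq> carrier G \<and> L <#>\<^bsub>G\<^esub> L \<subseteq> L <#>\<^bsub>G\<^esub> F)"

definition countable_approx_group :: "('a, 'b) monoid_scheme \<Rightarrow> 'a set \<Rightarrow> bool" where
  "countable_approx_group G L \<longleftrightarrow> group G \<and> approx_subgroup G L \<and> countable L"

definition metric_on :: "'a set \<Rightarrow> ('a \<Rightarrow> 'a \<Rightarrow> real) \<Rightarrow> bool" where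
  "metric_on S d \<longleftrightarrow> (\<forall>x\<in>S. \<forall>y\<in>S. d x y \<ge> 0 \<and> (d x y = 0 \<longleftrightarrow> x = y) \<and> d x y = d y x) \<and>
     (\<forall>x\<in>S. \<forall>y\<in>S. \<forall>z\<in>S. d x z \<le> d x y + d y z)"

definition left_invariant_on :: "('a, 'b) monoid_scheme \<Rightarrow> 'a set \<Rightarrow> ('a \<Rightarrow> 'a \<Rightarrow> real) \<Rightarrow> bool" where
  "left_invariant_on G S d \<longleftrightarrow> (\<forall>g\<in>S. \<forall>x\<in>S. \<forall>y\<in>S. d (g \<otimes>\<^bsub>G\<^esub> x) (g \<otimes>\<^bsub>G\<^esub> y) = d x y)"

text \<open>Proper: closed balls are compact; the countable group carries the discrete
  topology, so compact means finite.\<close>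
definition proper_metric_on :: "'a set \<Rightarrow> ('a \<Rightarrow> 'a \<Rightarrow> real) \<Rightarrow> bool" where
  "proper_metric_on S d \<longleftrightarrow> metric_on S d \<and> (\<forall>x\<in>S. \<forall>r. finite {y\<in>S. d x y \<le> r})"

definition defect_set ::
  "('a, 'b) monoid_scheme \<Rightarrow> ('c, 'd) monoid_scheme \<Rightarrow> 'a set \<Rightarrow> ('a \<Rightarrow> 'c) \<Rightarrow> 'c set" where
  "defect_set G H S f = {inv\<^bsub>H\<^esub> (f y) \<otimes>\<^bsub>H\<^esub> inv\<^bsub>H\<^esub> (f x) \<otimes>\<^bsub>H\<^esub> f (x \<otimes>\<^bsub>G\<^esub> y) | x y. x \<in> S \<and> y \<in> S}"

definition quasimorphism_on ::
  "('a, 'b) monoid_scheme \<Rightarrow> ('c, 'd) monoid_scheme \<Rightarrow> 'a set \<Rightarrow> ('a \<Rightarrow> 'c) \<Rightarrow> bool" where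
  "quasimorphism_on G H S f \<longleftrightarrow> finite (defect_set G H S f)"

definition symmetric_on ::
  "('a, 'b) monoid_scheme \<Rightarrow> ('c, 'd) monoid_scheme \<Rightarrow> 'a set \<Rightarrow> ('a \<Rightarrow> 'c) \<Rightarrow> bool" where
  "symmetric_on G H S f \<longleftrightarrow> (\<forall>x\<in>S. f (inv\<^bsub>G\<^esub> x) = inv\<^bsub>H\<^esub> (f x))"

end

theory Submission
  imports Defs
begin

text \<open>For \<open>\<xi>, \<eta> \<in> \<Xi>\<close> with \<open>d(\<xi>, \<eta>) \<le> t\<close>, left invariance puts \<open>\<xi>\<inverse>\<eta>\<close> in the ball \<open>B\<close> of radius \<open>t\<close>
  about the identity of \<open>\<Xi>\<^sup>\<infinity>\<close>, which is finite because \<open>d\<close> is proper. Since \<open>f\<close> is symmetric,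
  \<open>f(\<xi>)\<inverse>f(\<eta>) = f(\<xi>\<inverse>\<eta>)\<delta>\<inverse>\<close> with \<open>\<delta>\<close> in the finite defect set \<open>D(f)\<close>, so \<open>f(\<xi>)\<inverse>f(\<eta>)\<close> ranges
  over the finite set \<open>f(B)D(f)\<inverse>\<close>. By left invariance of \<open>d'\<close>, \<open>d'(f(\<xi>), f(\<eta>))\<close> is the distance
  of such an element from the identity, hence bounded.\<close>

lemma set_pow_subset_carrier:
  assumes "monoid G" "L \<subseteq> carrier G"
  shows "set_pow G L k \<subseteq> carrier G"
proof (induction k)
  case 0
  then show ?case using assms(1) by (simp add: monoid.one_closed)
next
  case (Suc k)
  then show ?case using assms by (auto simp: set_mult_def intro!: monoid.m_closed)
qed

lemma enveloping_subset_carrier: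
  assumes "monoid G" "L \<subseteq> carrier G"
  shows "enveloping G L \<subseteq> carrier G"
  using set_pow_subset_carrier[OF assms] unfolding enveloping_def by blast

lemma one_in_enveloping: "\<one>\<^bsub>G\<^esub> \<in> enveloping G L"
  unfolding enveloping_def by (auto intro: exI[of _ 0])

lemma set_pow_1:
  assumes "group G" "L \<subseteq> carrier G"
  shows "set_pow G L 1 = L"
  using assms by (simp add: group.coset_mult_one r_coset_eq_set_mult[symmetric])

lemma set_pow_2:
  assumes "group G" "L \<subseteq> carrier G"
  shows "set_pow G L 2 = L <#>\<^bsub>G\<^esub> L"
  using set_pow_1[OF assms] by (simp add: numeral_2_eq_2)

lemma subset_enveloping:
  assumes "group G" "L \<subseteq> carrier G"
  shows "L \<subseteq> enveloping G L"
  using set_pow_1[OF assms] unfolding enveloping_def by blast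

lemma mult_mem_enveloping:
  assumes "group G" "L \<subseteq> carrier G" "x \<in> L" "y \<in> L"
  shows "x \<otimes>\<^bsub>G\<^esub> y \<in> enveloping G L"
proof -
  have "x \<otimes>\<^bsub>G\<^esub> y \<in> set_pow G L 2"
    using assms(3,4) by (auto simp: set_pow_2[OF assms(1,2)] set_mult_def)
  then show ?thesis unfolding enveloping_def by blast
qed

lemma approx_subgroup_inv_closed:
  assumes "approx_subgroup G L" "x \<in> L"
  shows "inv\<^bsub>G\<^esub> x \<in> L"
  using assms unfolding approx_subgroup_def SET_INV_def by blast

lemma approx_subgroup_left_quotient_mem_enveloping:
  assumes "group G" "approx_subgroup G L" "x \<in> L" "y \<in> L"
  shows "inv\<^bsub>G\<^esub> x \<otimes>\<^bsub>G\<^esub> y \<in> enveloping G L"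
  using assms by (simp add: mult_mem_enveloping approx_subgroup_inv_closed approx_subgroup_def)

lemma left_invariant_on_dist_eq:
  assumes "group G" "S \<subseteq> carrier G" "left_invariant_on G S d"
    and "x \<in> S" "inv\<^bsub>G\<^esub> x \<in> S" "y \<in> S"
  shows "d x y = d \<one>\<^bsub>G\<^esub> (inv\<^bsub>G\<^esub> x \<otimes>\<^bsub>G\<^esub> y)"
proof -
  have "inv\<^bsub>G\<^esub> x \<otimes>\<^bsub>G\<^esub> x = \<one>\<^bsub>G\<^esub>"
    using assms(1,2,4) by (meson group.l_inv subsetD)
  then show ?thesis
    using assms(3-6) unfolding left_invariant_on_def by metis
qed

lemma approx_subgroup_dist_eq:
  assumes "group G" "approx_subgroup G L" "left_invariant_on G (enveloping G L) d"
    and "x \<in> L" "y \<in> L"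
  shows "d x y = d \<one>\<^bsub>G\<^esub> (inv\<^bsub>G\<^esub> x \<otimes>\<^bsub>G\<^esub> y)"
proof -
  have L: "L \<subseteq> carrier G"
    using assms(2) by (simp add: approx_subgroup_def)
  have "x \<in> enveloping G L" "inv\<^bsub>G\<^esub> x \<in> enveloping G L" "y \<in> enveloping G L"
    using subset_enveloping[OF assms(1) L] approx_subgroup_inv_closed[OF assms(2)] assms(4,5) by auto
  then show ?thesis
    using left_invariant_on_dist_eq[OF assms(1) _ assms(3)] enveloping_subset_carrier
      group.is_monoid[OF assms(1)] L by blast
qed

lemma symmetric_on_left_quotient_mem:
  assumes "group H" "symmetric_on G H S f" "f ` S \<subseteq> carrier H"
    and "x \<in> S" "inv\<^bsub>G\<^esub> x \<in> S" "y \<in> S" "inv\<^bsub>G\<^esub> x \<otimes>\<^bsub>G\<^esub> y \<in> S"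
  shows "inv\<^bsub>H\<^esub> (f x) \<otimes>\<^bsub>H\<^esub> f y
           \<in> (\<lambda>\<delta>. f (inv\<^bsub>G\<^esub> x \<otimes>\<^bsub>G\<^esub> y) \<otimes>\<^bsub>H\<^esub> inv\<^bsub>H\<^esub> \<delta>) ` defect_set G H S f"
proof -
  interpret H: group H by (rule assms(1))
  let ?p = "f (inv\<^bsub>G\<^esub> x \<otimes>\<^bsub>G\<^esub> y)"
  let ?\<delta> = "inv\<^bsub>H\<^esub> (f y) \<otimes>\<^bsub>H\<^esub> inv\<^bsub>H\<^esub> (f (inv\<^bsub>G\<^esub> x)) \<otimes>\<^bsub>H\<^esub> ?p"
  have carrier: "f x \<in> carrier H" "f y \<in> carrier H" "?p \<in> carrier H"
    using assms(3,4,6,7) by auto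
  have "f (inv\<^bsub>G\<^esub> x) = inv\<^bsub>H\<^esub> (f x)"
    using assms(2,4) unfolding symmetric_on_def by blast
  then have "inv\<^bsub>H\<^esub> ?\<delta> = inv\<^bsub>H\<^esub> ?p \<otimes>\<^bsub>H\<^esub> (inv\<^bsub>H\<^esub> (f x) \<otimes>\<^bsub>H\<^esub> f y)"
    using carrier by (simp add: H.inv_mult_group H.m_assoc)
  show ?thesis
  proof (rule image_eqI)
    show "inv\<^bsub>H\<^esub> (f x) \<otimes>\<^bsub>H\<^esub> f y = ?p \<otimes>\<^bsub>H\<^esub> inv\<^bsub>H\<^esub> ?\<delta>"
      using \<open>inv\<^bsub>H\<^esub> ?\<delta> = _\<close> carrier by (simp add: H.m_assoc[symmetric])
    show "?\<delta> \<in> defect_set G H S f"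
      unfolding defect_set_def using assms(5,6) by blast
  qed
qed

lemma approx_subgroup_left_quotient_mem_ball:
  assumes "group G" "approx_subgroup G L" "left_invariant_on G (enveloping G L) d"
    and "x \<in> L" "y \<in> L" "d x y \<le> t"
  shows "inv\<^bsub>G\<^esub> x \<otimes>\<^bsub>G\<^esub> y \<in> {z \<in> enveloping G L. d \<one>\<^bsub>G\<^esub> z \<le> t}"
  using approx_subgroup_left_quotient_mem_enveloping[OF assms(1,2,4,5)]
    approx_subgroup_dist_eq[OF assms(1-5)] assms(6) by simp

lemma symmetric_on_approx_subgroup_left_quotient_mem:
  assumes "group G" "approx_subgroup G L" "group H"
    and "symmetric_on G H (enveloping G L) f" "f ` enveloping G L \<subseteq> carrier H"
    and "x \<in> L" "y \<in> L"
  shows "inv\<^bsub>H\<^esub> (f x) \<otimes>\<^bsub>H\<^esub> f y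
           \<in> (\<lambda>\<delta>. f (inv\<^bsub>G\<^esub> x \<otimes>\<^bsub>G\<^esub> y) \<otimes>\<^bsub>H\<^esub> inv\<^bsub>H\<^esub> \<delta>) ` defect_set G H (enveloping G L) f"
proof (rule symmetric_on_left_quotient_mem[OF assms(3-5)])
  have "L \<subseteq> enveloping G L"
    using subset_enveloping[OF assms(1)] assms(2) by (simp add: approx_subgroup_def)
  then show "x \<in> enveloping G L" "inv\<^bsub>G\<^esub> x \<in> enveloping G L" "y \<in> enveloping G L"
    using assms(6,7) approx_subgroup_inv_closed[OF assms(2)] by auto
  show "inv\<^bsub>G\<^esub> x \<otimes>\<^bsub>G\<^esub> y \<in> enveloping G L"
    using approx_subgroup_left_quotient_mem_enveloping[OF assms(1,2,6,7)] .
qed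

lemma finite_imp_pos_upper_bound:
  fixes g :: "'a \<Rightarrow> real"
  assumes "finite A"
  shows "\<exists>s>0. \<forall>x\<in>A. g x \<le> s"
  using assms
proof (induction A rule: finite_induct)
  case empty
  then show ?case by (auto intro: exI[of _ 1])
next
  case (insert a A)
  then obtain s where "s > 0" "\<forall>x\<in>A. g x \<le> s" by blast
  then show ?case by (auto intro!: exI[of _ "max s (g a)"])
qed

theorem lemma5p1:
  fixes G :: "('a, 'b) monoid_scheme" and H :: "('c, 'e) monoid_scheme"
    and Xi :: "'a set" and Lam :: "'c set" and f :: "'a \<Rightarrow> 'c"
    and d :: "'a \<Rightarrow> 'a \<Rightarrow> real" and d' :: "'c \<Rightarrow> 'c \<Rightarrow> real"
  assumes "countable_approx_group G Xi"
    and "countable_approx_group H Lam"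
    and "f \<in> enveloping G Xi \<rightarrow> enveloping H Lam"
    and "f ` Xi \<subseteq> Lam"
    and "quasimorphism_on G H (enveloping G Xi) f"
    and "symmetric_on G H (enveloping G Xi) f"
    and "proper_metric_on (enveloping G Xi) d" and "left_invariant_on G (enveloping G Xi) d"
    and "proper_metric_on (enveloping H Lam) d'" and "left_invariant_on H (enveloping H Lam) d'"
  shows "\<forall>t>0. \<exists>s>0. \<forall>\<xi>\<in>Xi. \<forall>\<eta>\<in>Xi. d \<xi> \<eta> \<le> t \<longrightarrow> d' (f \<xi>) (f \<eta>) \<le> s"
proof (intro allI impI)
  fix t :: real
  let ?E = "enveloping G Xi"
  have G: "group G" "approx_subgroup G Xi" and H: "group H" "approx_subgroup H Lam"
    using assms(1,2) by (auto simp: countable_approx_group_def)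
  have f_carrier: "f ` ?E \<subseteq> carrier H"
    using assms(3) H(2) enveloping_subset_carrier[OF group.is_monoid[OF H(1)]]
    unfolding approx_subgroup_def by blast
  let ?B = "{y \<in> ?E. d \<one>\<^bsub>G\<^esub> y \<le> t}"
  let ?F = "(\<lambda>(a, \<delta>). f a \<otimes>\<^bsub>H\<^esub> inv\<^bsub>H\<^esub> \<delta>) ` (?B \<times> defect_set G H ?E f)"
  have "finite ?B"
    using assms(7) one_in_enveloping unfolding proper_metric_on_def by blast
  then have "finite ?F"
    using assms(5) unfolding quasimorphism_on_def by simp
  then obtain s where "s > 0" and s: "\<forall>z\<in>?F. d' \<one>\<^bsub>H\<^esub> z \<le> s"
    using finite_imp_pos_upper_bound by blast
  have "d' (f \<xi>) (f \<eta>) \<le> s" if "\<xi> \<in> Xi" "\<eta> \<in> Xi" "d \<xi> \<eta> \<le> t" for \<xi> \<eta>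
  proof -
    have "inv\<^bsub>H\<^esub> (f \<xi>) \<otimes>\<^bsub>H\<^esub> f \<eta> \<in> ?F"
      using approx_subgroup_left_quotient_mem_ball[OF G assms(8) that]
        symmetric_on_approx_subgroup_left_quotient_mem[OF G H(1) assms(6) f_carrier that(1,2)]
      by force
    moreover have "f \<xi> \<in> Lam" "f \<eta> \<in> Lam"
      using that(1,2) assms(4) by auto
    ultimately show ?thesis
      using approx_subgroup_dist_eq[OF H assms(10)] s by auto
  qed
  then show "\<exists>s>0. \<forall>\<xi>\<in>Xi. \<forall>\<eta>\<in>Xi. d \<xi> \<eta> \<le> t \<longrightarrow> d' (f \<xi>) (f \<eta>) \<le> s"
    using \<open>s > 0\<close> by blast
qed

end
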